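(* In the contextual bandit setting below, let $\hat\rho:\mathcal{A}\times\mathcal{X}\to\mathbb{R}$ and $\hat w:\mathbb{R}\to\mathbb{R}$ be fixed functions, let $(x_i,a_i,y_i)_{i=1}^n$ be i.i.d. from $p_{\pi^b}$, and define $\hat\theta_{\mathrm{IPW}}=\frac1n\sum_i\hat\rho(a_i,x_i)y_i$ and $\hat\theta_{\mathrm{MR}}=\frac1n\sum_i\hat w(y_i)y_i$. Let $\tilde w(Y)=\mathbb{E}_{\pi^b}[\hat\rho(A,X)\mid Y]$ and $\epsilon=\hat w(Y)-\tilde w(Y)$. Then, with $\mathrm{Bias}(\hat\theta)=\mathbb{E}_{\pi^b}[\hat\theta]-\mathbb{E}_{\pi^*}[Y]$, $$\mathrm{Bias}(\hat\theta_{\mathrm{MR}})-\mathrm{Bias}(\hat\theta_{\mathrm{IPW}})=\mathbb{E}_{\pi^b}[\epsilon Y],$$ and $$\mathbb{V}_{\pi^b}[\hat\theta_{\mathrm{IPW}}]-\mathbb{V}_{\pi^b}[\hat\theta_{\mathrm{MR}}]=\frac1n\Big(\mathbb{E}_{\pi^b}\big[\mathbb{V}_{\pi^b}[\hat\rho(A,X)Y\mid Y]\big]-\mathbb{V}_{\pi^b}[\epsilon Y]-2\,\mathrm{Cov}(\tilde w(Y)Y,\epsilon Y)\Big).$$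
   Context: Setting: context $X\in\mathcal{X}$, action $A\in\mathcal{A}$, real outcome $Y$; $p(x)$ context density, $p(y\mid x,a)$ outcome density; behaviour policy $\pi^b$ and target policy $\pi^*$ with $\pi^*(a\mid x)>0\Rightarrow \pi^b(a\mid x)>0$; $p_{\pi}(x,a,y)=p(y\mid x,a)\pi(a\mid x)p(x)$. $\mathbb{E}_{\pi},\mathbb{V}_{\pi}$ denote expectation/variance under $p_{\pi}$; covariance is under $p_{\pi^b}$. *)

theory Defs
  imports "HOL-Probability.Probability"
begin

text \<open>Joint law p_pi(x,a,y) = p(y|x,a) pi(a|x) p(x) of (context, action, outcome),
  as a density w.r.t. MX x MA x Lebesgue, with points written (x, a, y).\<close>
definition pol_measure ::
  "'x measure \<Rightarrow> 'a measure \<Rightarrow> ('x \<Rightarrow> real) \<Rightarrow> ('x \<Rightarrow> 'a \<Rightarrow> real \<Rightarrow> real)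
     \<Rightarrow> ('a \<Rightarrow> 'x \<Rightarrow> real) \<Rightarrow> ('x \<times> 'a \<times> real) measure" where
  "pol_measure MX MA px py pol =
     density (MX \<Otimes>\<^sub>M MA \<Otimes>\<^sub>M lborel) (\<lambda>(x, a, y). ennreal (py x a y * pol a x * px x))"

definition var_of :: "'b measure \<Rightarrow> ('b \<Rightarrow> real) \<Rightarrow> real" where
  "var_of M f = (\<integral>z. (f z - (\<integral>z. f z \<partial>M))\<^sup>2 \<partial>M)"

definition cov_of :: "'b measure \<Rightarrow> ('b \<Rightarrow> real) \<Rightarrow> ('b \<Rightarrow> real) \<Rightarrow> real" where
  "cov_of M f g = (\<integral>z. (f z - (\<integral>z. f z \<partial>M)) * (g z - (\<integral>z. g z \<partial>M)) \<partial>M)"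

definition cond_var_of :: "'b measure \<Rightarrow> 'b measure \<Rightarrow> ('b \<Rightarrow> real) \<Rightarrow> 'b \<Rightarrow> real" where
  "cond_var_of M F f = real_cond_exp M F (\<lambda>z. (f z - real_cond_exp M F f z)\<^sup>2)"

end

theory Submission
  imports Defs
begin

(* Both estimators are sample means of n i.i.d. copies of rho(A,X) Y and w(Y) Y, so their means
   are the one-sample means and their variances the one-sample variances divided by n.
   Since Y is sigma(Y)-measurable, wt(Y) Y is a version of E[rho(A,X) Y | Y]; hence
   E[w(Y) Y] - E[rho(A,X) Y] = E[eps Y].  For the variances, the law of total variance gives
   V[rho Y] = E[V[rho Y | Y]] + V[wt Y], while w(Y) Y = wt(Y) Y + eps Y gives
   V[w Y] = V[wt Y] + V[eps Y] + 2 Cov(wt Y, eps Y); subtracting cancels V[wt Y]. *)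

lemma integrable_mult_of_square_integrable:
  fixes f g :: "'b \<Rightarrow> real"
  assumes [measurable]: "f \<in> borel_measurable M" "g \<in> borel_measurable M"
    and "integrable M (\<lambda>z. (f z)\<^sup>2)" "integrable M (\<lambda>z. (g z)\<^sup>2)"
  shows "integrable M (\<lambda>z. f z * g z)"
proof (rule Bochner_Integration.integrable_bound)
  show "integrable M (\<lambda>z. (f z)\<^sup>2 + (g z)\<^sup>2)"
    using assms by simp
  have "\<bar>x * y\<bar> \<le> x\<^sup>2 + y\<^sup>2" for x y :: real
  proof -
    have "2 * \<bar>x\<bar> * \<bar>y\<bar> \<le> x\<^sup>2 + y\<^sup>2"
      using sum_squares_bound[of "\<bar>x\<bar>" "\<bar>y\<bar>"] by simp
    moreover have "0 \<le> \<bar>x\<bar> * \<bar>y\<bar>" by simp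
    ultimately show ?thesis unfolding abs_mult by linarith
  qed
  then show "AE z in M. norm (f z * g z) \<le> norm ((f z)\<^sup>2 + (g z)\<^sup>2)"
    by (intro AE_I2) simp
qed simp

lemma var_of_cong_AE:
  assumes "AE z in M. f z = g z"
  and [measurable]: "f \<in> borel_measurable M" "g \<in> borel_measurable M"
  shows "var_of M f = var_of M g"
proof -
  have "(\<integral>z. f z \<partial>M) = (\<integral>z. g z \<partial>M)"
    by (rule integral_cong_AE) (use assms in auto)
  then show ?thesis
    unfolding var_of_def by (intro integral_cong_AE) (use assms in auto)
qed

lemma subalgebra_vimage_algebra:
  assumes "f \<in> M \<rightarrow>\<^sub>M N"
  shows "subalgebra M (vimage_algebra (space M) f N)"
  unfolding subalgebra_def using assms
  by (auto simp: sets_vimage_algebra2 measurable_space intro: measurable_sets)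

context prob_space
begin

lemma var_of_add:
  fixes f g :: "'a \<Rightarrow> real"
  assumes [measurable]: "f \<in> borel_measurable M" "g \<in> borel_measurable M"
    and f2: "integrable M (\<lambda>z. (f z)\<^sup>2)" and g2: "integrable M (\<lambda>z. (g z)\<^sup>2)"
  shows "var_of M (\<lambda>z. f z + g z) = var_of M f + var_of M g + 2 * cov_of M f g"
proof -
  define f0 where "f0 = (\<lambda>z. f z - expectation f)"
  define g0 where "g0 = (\<lambda>z. g z - expectation g)"
  have [measurable]: "f0 \<in> borel_measurable M" "g0 \<in> borel_measurable M"
    by (simp_all add: f0_def g0_def)
  have "integrable M f" "integrable M g"
    using f2 g2 by (simp_all add: square_integrable_imp_integrable)
  then have f02: "integrable M (\<lambda>z. (f0 z)\<^sup>2)" and g02: "integrable M (\<lambda>z. (g0 z)\<^sup>2)"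
    using f2 g2 by (simp_all add: f0_def g0_def power2_diff)
  have f0g0: "integrable M (\<lambda>z. f0 z * g0 z)"
    by (rule integrable_mult_of_square_integrable) (use f02 g02 in auto)
  have "expectation (\<lambda>z. f z + g z) = expectation f + expectation g"
    using \<open>integrable M f\<close> \<open>integrable M g\<close> by simp
  then have "var_of M (\<lambda>z. f z + g z) = (\<integral>z. (f0 z)\<^sup>2 + (g0 z)\<^sup>2 + 2 * (f0 z * g0 z) \<partial>M)"
    unfolding var_of_def by (intro Bochner_Integration.integral_cong) (simp_all add: f0_def g0_def power2_eq_square algebra_simps)
  also have "\<dots> = (\<integral>z. (f0 z)\<^sup>2 \<partial>M) + (\<integral>z. (g0 z)\<^sup>2 \<partial>M) + 2 * (\<integral>z. f0 z * g0 z \<partial>M)"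
    using f02 g02 f0g0 by simp
  finally show ?thesis
    by (simp add: var_of_def cov_of_def f0_def g0_def)
qed

lemma integrable_square_real_cond_exp:
  fixes h :: "'a \<Rightarrow> real"
  assumes "subalgebra M F" and [measurable]: "h \<in> borel_measurable M"
    and h2: "integrable M (\<lambda>z. (h z)\<^sup>2)"
  shows "integrable M (\<lambda>z. (real_cond_exp M F h z)\<^sup>2)"
proof -
  interpret S: finite_measure_subalgebra M F
    by unfold_locales fact
  show ?thesis
    using h2 convex_power2 square_integrable_imp_integrable[OF _ h2]
    by (intro S.integrable_convex_cond_exp[where I = UNIV]) auto
qed

lemma law_of_total_variance:
  fixes h :: "'a \<Rightarrow> real"
  assumes sub: "subalgebra M F" and [measurable]: "h \<in> borel_measurable M"
    and h2: "integrable M (\<lambda>z. (h z)\<^sup>2)"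
  shows "var_of M h = (\<integral>z. cond_var_of M F h z \<partial>M) + var_of M (real_cond_exp M F h)"
proof -
  interpret S: finite_measure_subalgebra M F
    by unfold_locales fact
  define k where "k = real_cond_exp M F h"
  have [measurable]: "k \<in> borel_measurable F" "k \<in> borel_measurable M"
    by (simp_all add: k_def)
  have hi: "integrable M h"
    using h2 by (simp add: square_integrable_imp_integrable)
  have k2: "integrable M (\<lambda>z. (k z)\<^sup>2)"
    unfolding k_def by (rule integrable_square_real_cond_exp[OF sub _ h2]) simp
  have ki: "integrable M k" and k_mean: "expectation k = expectation h"
    unfolding k_def using hi by (rule S.real_cond_exp_int)+
  have kh: "integrable M (\<lambda>z. k z * h z)"
    using h2 k2 by (intro integrable_mult_of_square_integrable) simp_all
  have "expectation (\<lambda>z. k z * h z) = expectation (\<lambda>z. k z * k z)"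
    using S.real_cond_exp_intg(2)[OF kh] by (simp add: k_def)
  then have kh_mean: "expectation (\<lambda>z. k z * h z) = expectation (\<lambda>z. (k z)\<^sup>2)"
    by (simp add: power2_eq_square)
  have hk_expand: "(\<lambda>z. (h z - k z)\<^sup>2) = (\<lambda>z. (h z)\<^sup>2 + (k z)\<^sup>2 - 2 * (k z * h z))"
    by (simp add: fun_eq_iff power2_diff)
  then have hk2: "integrable M (\<lambda>z. (h z - k z)\<^sup>2)"
    using h2 k2 kh by simp
  have "(\<integral>z. cond_var_of M F h z \<partial>M) = expectation (\<lambda>z. (h z - k z)\<^sup>2)"
    unfolding cond_var_of_def k_def[symmetric] using hk2 by (rule S.real_cond_exp_int(2))
  also have "\<dots> = expectation (\<lambda>z. (h z)\<^sup>2) - expectation (\<lambda>z. (k z)\<^sup>2)"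
    unfolding hk_expand using h2 k2 kh kh_mean by simp
  finally have "(\<integral>z. cond_var_of M F h z \<partial>M) = expectation (\<lambda>z. (h z)\<^sup>2) - expectation (\<lambda>z. (k z)\<^sup>2)" .
  moreover have "variance h = expectation (\<lambda>z. (h z)\<^sup>2) - (expectation h)\<^sup>2"
    using hi h2 by (rule variance_eq)
  moreover have "variance k = expectation (\<lambda>z. (k z)\<^sup>2) - (expectation k)\<^sup>2"
    using ki k2 by (rule variance_eq)
  ultimately show ?thesis
    using k_mean unfolding var_of_def k_def[symmetric] by simp
qed

lemma var_of_diff_by_total_variance:
  fixes h u g :: "'a \<Rightarrow> real"
  assumes sub: "subalgebra M F"
    and [measurable]: "h \<in> borel_measurable M" "u \<in> borel_measurable M" "g \<in> borel_measurable M"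
    and h2: "integrable M (\<lambda>z. (h z)\<^sup>2)" and u2: "integrable M (\<lambda>z. (u z)\<^sup>2)"
    and g_version: "AE z in M. g z = real_cond_exp M F h z"
  shows "var_of M h - var_of M u
    = (\<integral>z. cond_var_of M F h z \<partial>M) - var_of M (\<lambda>z. u z - g z) - 2 * cov_of M g (\<lambda>z. u z - g z)"
proof -
  have "integrable M (\<lambda>z. (real_cond_exp M F h z)\<^sup>2)"
    by (rule integrable_square_real_cond_exp[OF sub _ h2]) simp
  then have g2: "integrable M (\<lambda>z. (g z)\<^sup>2)"
    by (rule integrable_cong_AE_imp) (use g_version in auto)
  have "integrable M (\<lambda>z. u z * g z)"
    using u2 g2 by (intro integrable_mult_of_square_integrable) simp_all
  moreover have "(\<lambda>z. (u z - g z)\<^sup>2) = (\<lambda>z. (u z)\<^sup>2 + (g z)\<^sup>2 - 2 * (u z * g z))"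
    by (simp add: fun_eq_iff power2_diff)
  ultimately have ug2: "integrable M (\<lambda>z. (u z - g z)\<^sup>2)"
    using u2 g2 by simp
  have "var_of M u = var_of M (\<lambda>z. g z + (u z - g z))"
    by simp
  also have "\<dots> = var_of M g + var_of M (\<lambda>z. u z - g z) + 2 * cov_of M g (\<lambda>z. u z - g z)"
    using g2 ug2 by (intro var_of_add) simp_all
  also have "var_of M g = var_of M (real_cond_exp M F h)"
    using g_version by (intro var_of_cong_AE) simp_all
  finally show ?thesis
    using law_of_total_variance[OF sub _ h2] by simp
qed

context
  fixes F :: "'a measure" and R W Y :: "'a \<Rightarrow> real"
  assumes sub: "subalgebra M F"
    and Y_F [measurable]: "Y \<in> borel_measurable F" and W_F [measurable]: "W \<in> borel_measurable F"
    and R_M [measurable]: "R \<in> borel_measurable M"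
    and RY2: "integrable M (\<lambda>z. (R z * Y z)\<^sup>2)" and WY2: "integrable M (\<lambda>z. (W z * Y z)\<^sup>2)"
begin

private lemma measurable_weights [measurable]:
  "Y \<in> borel_measurable M" "W \<in> borel_measurable M"
  by (rule measurable_from_subalg[OF sub], fact)+

private lemma cond_exp_weight_version:
  "AE z in M. real_cond_exp M F R z * Y z = real_cond_exp M F (\<lambda>z. R z * Y z) z"
proof -
  interpret S: finite_measure_subalgebra M F
    by unfold_locales (fact sub)
  have "integrable M (\<lambda>z. Y z * R z)"
    using RY2 by (simp add: square_integrable_imp_integrable mult.commute)
  then have "AE z in M. real_cond_exp M F (\<lambda>z. Y z * R z) z = Y z * real_cond_exp M F R z"
    by (intro S.real_cond_exp_mult) simp_all
  then show ?thesis
    by eventually_elim (simp add: mult.commute)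
qed

lemma integral_cond_exp_weight_error:
  "(\<integral>z. (W z - real_cond_exp M F R z) * Y z \<partial>M) = (\<integral>z. W z * Y z \<partial>M) - (\<integral>z. R z * Y z \<partial>M)"
proof -
  interpret S: finite_measure_subalgebra M F
    by unfold_locales (fact sub)
  have RYi: "integrable M (\<lambda>z. R z * Y z)" and WYi: "integrable M (\<lambda>z. W z * Y z)"
    using RY2 WY2 by (simp_all add: square_integrable_imp_integrable)
  have "integrable M (real_cond_exp M F (\<lambda>z. R z * Y z))"
    using RYi by (rule S.real_cond_exp_int)
  then have gi: "integrable M (\<lambda>z. real_cond_exp M F R z * Y z)"
    by (rule integrable_cong_AE_imp) (use cond_exp_weight_version in auto)
  have "(\<integral>z. real_cond_exp M F R z * Y z \<partial>M) = (\<integral>z. real_cond_exp M F (\<lambda>z. R z * Y z) z \<partial>M)"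
    by (intro integral_cong_AE) (use cond_exp_weight_version in auto)
  also have "\<dots> = (\<integral>z. R z * Y z \<partial>M)"
    using RYi by (rule S.real_cond_exp_int)
  finally show ?thesis
    using WYi gi by (simp add: left_diff_distrib)
qed

lemma var_of_diff_cond_exp_weight:
  "var_of M (\<lambda>z. R z * Y z) - var_of M (\<lambda>z. W z * Y z)
     = (\<integral>z. cond_var_of M F (\<lambda>z. R z * Y z) z \<partial>M)
       - var_of M (\<lambda>z. (W z - real_cond_exp M F R z) * Y z)
       - 2 * cov_of M (\<lambda>z. real_cond_exp M F R z * Y z) (\<lambda>z. (W z - real_cond_exp M F R z) * Y z)"
proof -
  have "(\<lambda>z. (W z - real_cond_exp M F R z) * Y z) = (\<lambda>z. W z * Y z - real_cond_exp M F R z * Y z)"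
    by (simp add: fun_eq_iff left_diff_distrib)
  then show ?thesis
    using cond_exp_weight_version RY2 WY2
    by (simp add: var_of_diff_by_total_variance[OF sub])
qed

end

lemma integral_PiM_component:
  fixes g :: "'a \<Rightarrow> real"
  assumes "i \<in> I" and "integrable M g"
  shows "integrable (PiM I (\<lambda>_. M)) (\<lambda>s. g (s i))"
    and "(\<integral>s. g (s i) \<partial>PiM I (\<lambda>_. M)) = expectation g"
proof -
  have law: "distr (PiM I (\<lambda>_. M)) M (\<lambda>s. s i) = M"
    using \<open>i \<in> I\<close> by (intro distr_PiM_component) (simp add: prob_space_axioms)
  have [measurable]: "(\<lambda>s. s i) \<in> PiM I (\<lambda>_. M) \<rightarrow>\<^sub>M M" "g \<in> borel_measurable M"
    using \<open>i \<in> I\<close> \<open>integrable M g\<close> by simp_all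
  show "integrable (PiM I (\<lambda>_. M)) (\<lambda>s. g (s i))"
    using \<open>integrable M g\<close> integrable_distr_eq[of "\<lambda>s. s i" "PiM I (\<lambda>_. M)" M g] by (simp add: law)
  show "(\<integral>s. g (s i) \<partial>PiM I (\<lambda>_. M)) = expectation g"
    using integral_distr[of "\<lambda>s. s i" "PiM I (\<lambda>_. M)" M g] by (simp add: law)
qed

lemma integral_PiM_components_mult:
  fixes f g :: "'a \<Rightarrow> real"
  assumes "finite I" "i \<in> I" "j \<in> I" "i \<noteq> j" and "integrable M f" "integrable M g"
  shows "integrable (PiM I (\<lambda>_. M)) (\<lambda>s. f (s i) * g (s j))"
    and "(\<integral>s. f (s i) * g (s j) \<partial>PiM I (\<lambda>_. M)) = expectation f * expectation g"
proof -
  interpret product_sigma_finite "\<lambda>_. M"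
    by (simp add: product_sigma_finite_def sigma_finite_measure_axioms)
  define G where "G k = (if k = i then f else if k = j then g else (\<lambda>_. 1))" for k
  have G_int: "integrable M (G k)" for k
    using assms by (simp add: G_def)
  have "(\<Prod>k\<in>I. G k (s k)) = (\<Prod>k\<in>{i, j}. G k (s k))" for s
    using assms by (intro prod.mono_neutral_right) (auto simp: G_def)
  then have G_prod: "(\<lambda>s. \<Prod>k\<in>I. G k (s k)) = (\<lambda>s. f (s i) * g (s j))"
    using \<open>i \<noteq> j\<close> by (simp add: G_def)
  show "integrable (PiM I (\<lambda>_. M)) (\<lambda>s. f (s i) * g (s j))"
    using product_integrable_prod[of I G] \<open>finite I\<close> G_int by (simp add: G_prod)
  have "(\<integral>s. f (s i) * g (s j) \<partial>PiM I (\<lambda>_. M)) = (\<Prod>k\<in>I. integral\<^sup>L M (G k))"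
    unfolding G_prod[symmetric] using \<open>finite I\<close> G_int by (rule product_integral_prod)
  also have "\<dots> = (\<Prod>k\<in>{i, j}. integral\<^sup>L M (G k))"
    using assms by (intro prod.mono_neutral_right) (auto simp: G_def prob_space)
  also have "\<dots> = expectation f * expectation g"
    using \<open>i \<noteq> j\<close> by (simp add: G_def)
  finally show "(\<integral>s. f (s i) * g (s j) \<partial>PiM I (\<lambda>_. M)) = expectation f * expectation g" .
qed

lemma integral_PiM_square_sum_components:
  fixes d :: "'a \<Rightarrow> real"
  assumes "finite I" and [measurable]: "d \<in> borel_measurable M"
    and d2: "integrable M (\<lambda>z. (d z)\<^sup>2)" and centred: "expectation d = 0"
  shows "(\<integral>s. (\<Sum>i\<in>I. d (s i))\<^sup>2 \<partial>PiM I (\<lambda>_. M)) = card I * expectation (\<lambda>z. (d z)\<^sup>2)"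
proof -
  have di: "integrable M d"
    using d2 by (simp add: square_integrable_imp_integrable)
  have pair: "integrable (PiM I (\<lambda>_. M)) (\<lambda>s. d (s i) * d (s j))
      \<and> (\<integral>s. d (s i) * d (s j) \<partial>PiM I (\<lambda>_. M)) = (if i = j then expectation (\<lambda>z. (d z)\<^sup>2) else 0)"
    if "i \<in> I" "j \<in> I" for i j
    using integral_PiM_component[OF \<open>i \<in> I\<close> d2] integral_PiM_components_mult[OF \<open>finite I\<close> that _ di di]
    by (cases "i = j") (simp_all add: centred power2_eq_square)
  have "(\<integral>s. (\<Sum>i\<in>I. d (s i))\<^sup>2 \<partial>PiM I (\<lambda>_. M))
      = (\<integral>s. (\<Sum>i\<in>I. \<Sum>j\<in>I. d (s i) * d (s j)) \<partial>PiM I (\<lambda>_. M))"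
    by (simp add: power2_eq_square sum_product)
  also have "\<dots> = (\<Sum>i\<in>I. \<Sum>j\<in>I. \<integral>s. d (s i) * d (s j) \<partial>PiM I (\<lambda>_. M))"
    using pair by (simp add: Bochner_Integration.integral_sum Bochner_Integration.integrable_sum)
  also have "\<dots> = card I * expectation (\<lambda>z. (d z)\<^sup>2)"
    using pair \<open>finite I\<close> by simp
  finally show ?thesis .
qed

lemma integral_sample_mean:
  fixes f :: "'a \<Rightarrow> real"
  assumes "finite I" "I \<noteq> {}" and "integrable M f"
  shows "(\<integral>s. (\<Sum>i\<in>I. f (s i)) / card I \<partial>PiM I (\<lambda>_. M)) = expectation f"
proof -
  have "(\<integral>s. (\<Sum>i\<in>I. f (s i)) \<partial>PiM I (\<lambda>_. M)) = (\<Sum>i\<in>I. \<integral>s. f (s i) \<partial>PiM I (\<lambda>_. M))"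
    using integral_PiM_component(1)[OF _ \<open>integrable M f\<close>] by (rule Bochner_Integration.integral_sum)
  also have "\<dots> = card I * expectation f"
    by (simp add: integral_PiM_component(2)[OF _ \<open>integrable M f\<close>] cong: sum.cong)
  finally show ?thesis
    using assms by simp
qed

lemma var_of_sample_mean:
  fixes f :: "'a \<Rightarrow> real"
  assumes "finite I" "I \<noteq> {}" and [measurable]: "f \<in> borel_measurable M"
    and f2: "integrable M (\<lambda>z. (f z)\<^sup>2)"
  shows "var_of (PiM I (\<lambda>_. M)) (\<lambda>s. (\<Sum>i\<in>I. f (s i)) / card I) = var_of M f / card I"
proof -
  have fi: "integrable M f"
    using f2 by (simp add: square_integrable_imp_integrable)
  define d where "d = (\<lambda>z. f z - expectation f)"
  have [measurable]: "d \<in> borel_measurable M"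
    by (simp add: d_def)
  have d2: "integrable M (\<lambda>z. (d z)\<^sup>2)"
    using fi f2 by (simp add: d_def power2_diff)
  have centred: "expectation d = 0"
    using fi by (simp add: d_def prob_space)
  have "(\<Sum>i\<in>I. f (s i)) / card I - expectation f = (\<Sum>i\<in>I. d (s i)) / card I" for s
    using assms by (simp add: d_def sum_subtractf field_simps)
  then have "var_of (PiM I (\<lambda>_. M)) (\<lambda>s. (\<Sum>i\<in>I. f (s i)) / card I)
      = (\<integral>s. (\<Sum>i\<in>I. d (s i))\<^sup>2 \<partial>PiM I (\<lambda>_. M)) / (card I)\<^sup>2"
    unfolding var_of_def integral_sample_mean[OF assms(1,2) fi] by (simp add: power_divide)
  also have "\<dots> = var_of M f / card I"
    using integral_PiM_square_sum_components[OF \<open>finite I\<close> _ d2 centred] \<open>finite I\<close> \<open>I \<noteq> {}\<close>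
    by (simp add: var_of_def d_def power2_eq_square)
  finally show ?thesis .
qed

end

lemma nn_integral_normalized_cmult:
  fixes f :: "'b \<Rightarrow> real"
  assumes "f \<in> borel_measurable N" "c \<ge> 0" and "(\<integral>\<^sup>+ y. ennreal (f y) \<partial>N) = 1"
  shows "(\<integral>\<^sup>+ y. ennreal (f y * c) \<partial>N) = ennreal c"
proof -
  have "(\<integral>\<^sup>+ y. ennreal (f y * c) \<partial>N) = (\<integral>\<^sup>+ y. ennreal (f y) * ennreal c \<partial>N)"
    using \<open>c \<ge> 0\<close> by (simp add: ennreal_mult'')
  also have "\<dots> = ennreal c"
    using assms by (simp add: nn_integral_multc)
  finally show ?thesis .
qed

lemma sets_pol_measure [measurable_cong]:
  "sets (pol_measure MX MA px py pol) = sets (MX \<Otimes>\<^sub>M MA \<Otimes>\<^sub>M borel)"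
  by (simp add: pol_measure_def cong: sets_pair_measure_cong)

lemma prob_space_pol_measure:
  fixes MX :: "'x measure" and MA :: "'a measure"
  assumes "sigma_finite_measure MX" and "sigma_finite_measure MA"
    and px_meas: "px \<in> borel_measurable MX"
    and px_nn: "\<And>x. x \<in> space MX \<Longrightarrow> px x \<ge> 0"
    and px_norm: "(\<integral>\<^sup>+ x. ennreal (px x) \<partial>MX) = 1"
    and py_meas: "(\<lambda>(x, a, y). py x a y) \<in> borel_measurable (MX \<Otimes>\<^sub>M MA \<Otimes>\<^sub>M borel)"
    and py_norm: "\<And>x a. x \<in> space MX \<Longrightarrow> a \<in> space MA \<Longrightarrow> (\<integral>\<^sup>+ y. ennreal (py x a y) \<partial>lborel) = 1"
    and pol_meas: "(\<lambda>(a, x). pol a x) \<in> borel_measurable (MA \<Otimes>\<^sub>M MX)"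
    and pol_nn: "\<And>a x. a \<in> space MA \<Longrightarrow> x \<in> space MX \<Longrightarrow> pol a x \<ge> 0"
    and pol_norm: "\<And>x. x \<in> space MX \<Longrightarrow> (\<integral>\<^sup>+ a. ennreal (pol a x) \<partial>MA) = 1"
  shows "prob_space (pol_measure MX MA px py pol)"
proof (rule prob_spaceI)
  interpret MX: sigma_finite_measure MX by fact
  interpret MA_lborel: pair_sigma_finite MA lborel
    by (simp add: pair_sigma_finite_def assms(2) lborel.sigma_finite_measure_axioms)
  let ?d = "\<lambda>(x, a, y). ennreal (py x a y * (pol a x * px x))"
  have "(\<lambda>z. pol (fst (snd z)) (fst z)) \<in> borel_measurable (MX \<Otimes>\<^sub>M MA \<Otimes>\<^sub>M lborel)"
  proof -
    have "(\<lambda>z. (fst (snd z), fst z)) \<in> MX \<Otimes>\<^sub>M MA \<Otimes>\<^sub>M lborel \<rightarrow>\<^sub>M MA \<Otimes>\<^sub>M MX"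
      by measurable
    from measurable_comp[OF this pol_meas] show ?thesis
      by (simp add: o_def)
  qed
  moreover have "(\<lambda>z. py (fst z) (fst (snd z)) (snd (snd z))) \<in> borel_measurable (MX \<Otimes>\<^sub>M MA \<Otimes>\<^sub>M lborel)"
    using py_meas by (simp add: case_prod_unfold cong: measurable_cong_sets)
  ultimately have d_meas: "?d \<in> borel_measurable (MX \<Otimes>\<^sub>M MA \<Otimes>\<^sub>M lborel)"
    using px_meas unfolding case_prod_beta by measurable
  have "emeasure (pol_measure MX MA px py pol) (space (pol_measure MX MA px py pol))
      = (\<integral>\<^sup>+ z. ?d z \<partial>(MX \<Otimes>\<^sub>M MA \<Otimes>\<^sub>M lborel))"
    unfolding pol_measure_def using d_meas
    by (simp add: emeasure_density[OF d_meas sets.top] mult.assoc cong: nn_integral_cong)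
  also have "\<dots> = (\<integral>\<^sup>+ x. \<integral>\<^sup>+ ay. ?d (x, ay) \<partial>(MA \<Otimes>\<^sub>M lborel) \<partial>MX)"
    using d_meas by (simp add: MA_lborel.nn_integral_fst[symmetric])
  also have "\<dots> = (\<integral>\<^sup>+ x. \<integral>\<^sup>+ a. \<integral>\<^sup>+ y. ?d (x, a, y) \<partial>lborel \<partial>MA \<partial>MX)"
  proof (rule nn_integral_cong)
    fix x assume "x \<in> space MX"
    then have "(\<lambda>ay. ?d (x, ay)) \<in> borel_measurable (MA \<Otimes>\<^sub>M lborel)"
      using d_meas by measurable
    then show "(\<integral>\<^sup>+ ay. ?d (x, ay) \<partial>(MA \<Otimes>\<^sub>M lborel)) = (\<integral>\<^sup>+ a. \<integral>\<^sup>+ y. ?d (x, a, y) \<partial>lborel \<partial>MA)"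
      by (simp add: lborel.nn_integral_fst[symmetric])
  qed
  also have "\<dots> = (\<integral>\<^sup>+ x. ennreal (px x) \<partial>MX)"
  proof (rule nn_integral_cong)
    fix x assume x: "x \<in> space MX"
    have "(\<integral>\<^sup>+ a. \<integral>\<^sup>+ y. ennreal (py x a y * (pol a x * px x)) \<partial>lborel \<partial>MA)
        = (\<integral>\<^sup>+ a. ennreal (pol a x * px x) \<partial>MA)"
    proof (rule nn_integral_cong)
      fix a assume a: "a \<in> space MA"
      have "(\<lambda>y. (x, a, y)) \<in> lborel \<rightarrow>\<^sub>M MX \<Otimes>\<^sub>M MA \<Otimes>\<^sub>M borel"
        using x a by measurable
      from measurable_comp[OF this py_meas] show "(\<integral>\<^sup>+ y. ennreal (py x a y * (pol a x * px x)) \<partial>lborel) = ennreal (pol a x * px x)"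
        using x a pol_nn px_nn py_norm by (intro nn_integral_normalized_cmult) (simp_all add: o_def)
    qed
    also have "\<dots> = ennreal (px x)"
    proof -
      have "(\<lambda>a. (a, x)) \<in> MA \<rightarrow>\<^sub>M MA \<Otimes>\<^sub>M MX"
        using x by measurable
      from measurable_comp[OF this pol_meas] show ?thesis
        using x px_nn pol_norm by (intro nn_integral_normalized_cmult) (simp_all add: o_def)
    qed
    finally show "(\<integral>\<^sup>+ a. \<integral>\<^sup>+ y. ?d (x, a, y) \<partial>lborel \<partial>MA) = ennreal (px x)"
      by simp
  qed
  finally show "emeasure (pol_measure MX MA px py pol) (space (pol_measure MX MA px py pol)) = 1"
    using px_norm by simp
qed

lemma measurable_pol_measure_weight:
  assumes "(\<lambda>(a, x). rho a x) \<in> borel_measurable (MA \<Otimes>\<^sub>M MX)"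
  shows "(\<lambda>z. rho (fst (snd z)) (fst z)) \<in> borel_measurable (pol_measure MX MA px py pol)"
proof -
  have "(\<lambda>z. (fst (snd z), fst z)) \<in> pol_measure MX MA px py pol \<rightarrow>\<^sub>M MA \<Otimes>\<^sub>M MX"
    by measurable
  from measurable_comp[OF this assms] show ?thesis
    by (simp add: o_def)
qed

theorem proposition2p6:
  fixes MX :: "'x measure" and MA :: "'a measure"
    and px :: "'x \<Rightarrow> real" and py :: "'x \<Rightarrow> 'a \<Rightarrow> real \<Rightarrow> real"
    and pib pis :: "'a \<Rightarrow> 'x \<Rightarrow> real"
    and rho :: "'a \<Rightarrow> 'x \<Rightarrow> real" and w :: "real \<Rightarrow> real"
    and n :: nat
  defines "Mb \<equiv> pol_measure MX MA px py pib"
      and "Ms \<equiv> pol_measure MX MA px py pis"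
      and "FY \<equiv> vimage_algebra (space (pol_measure MX MA px py pib)) (\<lambda>z. snd (snd z)) borel"
      and "P \<equiv> PiM {..<n} (\<lambda>_. (pol_measure MX MA px py pib))"
      and "th_ipw \<equiv> (\<lambda>s. (\<Sum>i<n. rho (fst (snd (s i))) (fst (s i)) * snd (snd (s i))) / real n)"
      and "th_mr \<equiv> (\<lambda>s. (\<Sum>i<n. w (snd (snd (s i))) * snd (snd (s i))) / real n)"
      and "wt \<equiv> real_cond_exp (pol_measure MX MA px py pib) (vimage_algebra (space (pol_measure MX MA px py pib)) (\<lambda>z. snd (snd z)) borel) (\<lambda>z. rho (fst (snd z)) (fst z))"
      and "eps \<equiv> (\<lambda>z. w (snd (snd z)) - real_cond_exp (pol_measure MX MA px py pib) (vimage_algebra (space (pol_measure MX MA px py pib)) (\<lambda>z. snd (snd z)) borel) (\<lambda>z. rho (fst (snd z)) (fst z)) z)"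
  assumes sfX: "sigma_finite_measure MX" and sfA: "sigma_finite_measure MA"
    and px_meas: "px \<in> borel_measurable MX"
    and px_nn: "\<And>x. x \<in> space MX \<Longrightarrow> px x \<ge> 0"
    and px_norm: "(\<integral>\<^sup>+ x. ennreal (px x) \<partial>MX) = 1"
    and py_meas: "(\<lambda>(x, a, y). py x a y) \<in> borel_measurable (MX \<Otimes>\<^sub>M MA \<Otimes>\<^sub>M borel)"
    and py_nn: "\<And>x a y. x \<in> space MX \<Longrightarrow> a \<in> space MA \<Longrightarrow> py x a y \<ge> 0"
    and py_norm: "\<And>x a. x \<in> space MX \<Longrightarrow> a \<in> space MA \<Longrightarrow> (\<integral>\<^sup>+ y. ennreal (py x a y) \<partial>lborel) = 1"
    and pib_meas: "(\<lambda>(a, x). pib a x) \<in> borel_measurable (MA \<Otimes>\<^sub>M MX)"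
    and pis_meas: "(\<lambda>(a, x). pis a x) \<in> borel_measurable (MA \<Otimes>\<^sub>M MX)"
    and pib_nn: "\<And>a x. a \<in> space MA \<Longrightarrow> x \<in> space MX \<Longrightarrow> pib a x \<ge> 0"
    and pis_nn: "\<And>a x. a \<in> space MA \<Longrightarrow> x \<in> space MX \<Longrightarrow> pis a x \<ge> 0"
    and pib_norm: "\<And>x. x \<in> space MX \<Longrightarrow> (\<integral>\<^sup>+ a. ennreal (pib a x) \<partial>MA) = 1"
    and pis_norm: "\<And>x. x \<in> space MX \<Longrightarrow> (\<integral>\<^sup>+ a. ennreal (pis a x) \<partial>MA) = 1"
    and supp: "\<And>a x. a \<in> space MA \<Longrightarrow> x \<in> space MX \<Longrightarrow> pis a x > 0 \<Longrightarrow> pib a x > 0"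
    and rho_meas: "(\<lambda>(a, x). rho a x) \<in> borel_measurable (MA \<Otimes>\<^sub>M MX)"
    and w_meas: "w \<in> borel_measurable borel"
    and rho_int: "integrable Mb (\<lambda>z. rho (fst (snd z)) (fst z))"
    and rhoY_sq: "integrable Mb (\<lambda>z. (rho (fst (snd z)) (fst z) * snd (snd z))\<^sup>2)"
    and wY_sq: "integrable Mb (\<lambda>z. (w (snd (snd z)) * snd (snd z))\<^sup>2)"
    and n_pos: "n > 0"
  shows "(((\<integral>s. th_mr s \<partial>P) - (\<integral>z. snd (snd z) \<partial>Ms))
           - ((\<integral>s. th_ipw s \<partial>P) - (\<integral>z. snd (snd z) \<partial>Ms))
         = (\<integral>z. eps z * snd (snd z) \<partial>Mb))
    \<and> (var_of P th_ipw - var_of P th_mr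
         = (1 / real n) *
           ((\<integral>z. cond_var_of Mb FY (\<lambda>z. rho (fst (snd z)) (fst z) * snd (snd z)) z \<partial>Mb)
            - var_of Mb (\<lambda>z. eps z * snd (snd z))
            - 2 * cov_of Mb (\<lambda>z. wt z * snd (snd z)) (\<lambda>z. eps z * snd (snd z))))"
proof -
  have "prob_space Mb"
    unfolding Mb_def using sfX sfA px_meas px_nn px_norm py_meas py_norm pib_meas pib_nn pib_norm
    by (rule prob_space_pol_measure)
  then interpret Mb: prob_space Mb .
  have P_eq: "P = PiM {..<n} (\<lambda>_. Mb)" and FY_eq: "FY = vimage_algebra (space Mb) (\<lambda>z. snd (snd z)) borel"
    and wt_eq: "wt = real_cond_exp Mb FY (\<lambda>z. rho (fst (snd z)) (fst z))"
    and eps_eq: "eps = (\<lambda>z. w (snd (snd z)) - real_cond_exp Mb FY (\<lambda>z. rho (fst (snd z)) (fst z)) z)"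
    unfolding P_def FY_def wt_def eps_def Mb_def by (rule refl)+
  have Y_Mb [measurable]: "(\<lambda>z. snd (snd z)) \<in> borel_measurable Mb"
    unfolding Mb_def by measurable
  have R_Mb [measurable]: "(\<lambda>z. rho (fst (snd z)) (fst z)) \<in> borel_measurable Mb"
    unfolding Mb_def using rho_meas by (rule measurable_pol_measure_weight)
  have sub: "subalgebra Mb FY"
    unfolding FY_eq using Y_Mb by (rule subalgebra_vimage_algebra)
  have Y_FY: "(\<lambda>z. snd (snd z)) \<in> borel_measurable FY"
    unfolding FY_eq by (rule measurable_vimage_algebra1) simp
  have W_FY: "(\<lambda>z. w (snd (snd z))) \<in> borel_measurable FY"
    using Y_FY w_meas by (rule measurable_compose)
  have sample_mean: "(\<integral>s. (\<Sum>i<n. f (s i)) / n \<partial>P) = (\<integral>z. f z \<partial>Mb)"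
      "var_of P (\<lambda>s. (\<Sum>i<n. f (s i)) / n) = var_of Mb f / n"
    if "f \<in> borel_measurable Mb" "integrable Mb (\<lambda>z. (f z)\<^sup>2)" for f
    using Mb.integral_sample_mean[of "{..<n}" f] Mb.var_of_sample_mean[of "{..<n}" f]
      n_pos that Mb.square_integrable_imp_integrable[OF that]
    unfolding P_eq by (simp_all add: lessThan_empty_iff)
  have "(\<lambda>z. w (snd (snd z)) * snd (snd z)) \<in> borel_measurable Mb"
    using measurable_from_subalg[OF sub W_FY] by measurable
  \<comment> \<open>The two Ms-terms cancel.\<close>
  then show ?thesis
    unfolding th_ipw_def th_mr_def wt_eq eps_eq
    using sample_mean[OF _ rhoY_sq] sample_mean[OF _ wY_sq]
      Mb.integral_cond_exp_weight_error[OF sub Y_FY W_FY R_Mb rhoY_sq wY_sq]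
      Mb.var_of_diff_cond_exp_weight[OF sub Y_FY W_FY R_Mb rhoY_sq wY_sq]
    by (simp add: diff_divide_distrib[symmetric])
qed

end
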